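(* Let $\lambda$ be a partition with $d(\lambda)\ge3$, let $\ell=d(\lambda)-3$ and $A=\mathcal{L}(\lambda)$. Then $\mathbb{SG}(A)=\mathbb{SG}(A[\ell,\ell])$.
   Context: A partition is a finite non-increasing sequence $\lambda=(\lambda_1,\dots,\lambda_r)$ of positive integers; $()$ is the empty partition. Durfee length: $d(\lambda)=\max\{k:\lambda_k\ge k\}$. For non-negative $i,j$, $\lambda[i,j]$ is $(\lambda_{i+1}-j,\dots,\lambda_r-j)$ with all non-positive entries removed. LCTR: positions $\mathcal{L}(\mu)$; if $\mu\neq()$ the two moves go to $\mathcal{L}(\mu[1,0])$ and $\mathcal{L}(\mu[0,1])$; $\mathcal{L}(())$ is terminal. For $A=\mathcal{L}(\lambda)$, $A[i,j]=\mathcal{L}(\lambda[i,j])$. Normal play; $\mathbb{SG}(A)=\operatorname{mex}\{\mathbb{SG}(B):A\to B\}$. *)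

theory Defs
  imports Main
begin

definition is_partition :: "nat list \<Rightarrow> bool" where
  "is_partition l \<longleftrightarrow> sorted_wrt (\<ge>) l \<and> (\<forall>x\<in>set l. 0 < x)"

definition durfee :: "nat list \<Rightarrow> nat" where
  "durfee l = Max ({0} \<union> {k. 1 \<le> k \<and> k \<le> length l \<and> k \<le> l ! (k - 1)})"

text \<open>lambda[i,j]: drop the first i parts, subtract j from each, remove non-positive entries.\<close>
definition shift :: "nat list \<Rightarrow> nat \<Rightarrow> nat \<Rightarrow> nat list" where
  "shift l i j = filter (\<lambda>x. 0 < x) (map (\<lambda>x. x - j) (drop i l))"

definition mex :: "nat set \<Rightarrow> nat" where
  "mex S = (LEAST n. n \<notin> S)"

lemma shift_measure:
  "l \<noteq> [] \<Longrightarrow> sum_list (shift l 1 0) + length (shift l 1 0) < sum_list l + length l"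
  "l \<noteq> [] \<Longrightarrow> sum_list (shift l 0 1) + length (shift l 0 1) < sum_list l + length l"
proof -
  have gen: "sum_list (filter (\<lambda>x. 0 < x) (map (\<lambda>x. x - j) xs)) + length (filter (\<lambda>x. 0 < x) (map (\<lambda>x. x - j) xs)) \<le> sum_list xs + length xs" for xs :: "nat list" and j
    by (induction xs) auto
  have gen1: "xs \<noteq> [] \<Longrightarrow> sum_list (filter (\<lambda>x. 0 < x) (map (\<lambda>x. x - 1) xs)) + length (filter (\<lambda>x. 0 < x) (map (\<lambda>x. x - 1) xs)) < sum_list xs + length xs" for xs :: "nat list"
  proof (induction xs)
    case (Cons a xs)
    then show ?case using gen[of 1 xs] by (cases xs) auto
  qed simp
  show "l \<noteq> [] \<Longrightarrow> sum_list (shift l 1 0) + length (shift l 1 0) < sum_list l + length l"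
    using gen[of 0 "tl l"] by (cases l) (auto simp: shift_def)
  show "l \<noteq> [] \<Longrightarrow> sum_list (shift l 0 1) + length (shift l 0 1) < sum_list l + length l"
    using gen1[of l] by (simp add: shift_def)
qed

text \<open>Sprague-Grundy value of the LCTR position L(mu): the two moves go to mu[1,0] and mu[0,1];
  L(()) is terminal (no moves, value mex {} = 0).\<close>
function sg :: "nat list \<Rightarrow> nat" where
  "sg l = (if l = [] then mex {} else mex {sg (shift l 1 0), sg (shift l 0 1)})"
  by auto
termination
  by (relation "measure (\<lambda>l. sum_list l + length l)") (use shift_measure in \<open>auto simp del: One_nat_def simp: One_nat_def[symmetric]\<close>)

declare sg.simps[simp del]

end

theory Submission
  imports Defs
begin

text \<open>Write \<open>g i j\<close> for the Sprague-Grundy value of \<open>\<L>(\<lambda>[i,j])\<close>. It vanishes outside the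
  Young diagram of \<open>\<lambda>\<close>, and inside it \<open>g i j = mex {g (i+1) j, g i (j+1)}\<close>, so all values
  lie in \<open>{0,1,2}\<close>. The theorem follows by walking down the diagonal with
  \<open>g i j = g (i+1) (j+1)\<close>, valid whenever cell \<open>(i+3, j+3)\<close> lies in the diagram. By induction
  from the rim inwards only a \<open>4 \<times> 4\<close> block whose corner cell \<open>(i+4, j+4)\<close> is outside the
  diagram needs attention; that block is determined by the four values to its right and the four
  below it. A window of four consecutive cells of a row (or column), swept through the diagram,
  only ever takes one of 26 states, and for every pair of states the filled block satisfies the
  diagonal identity. Both facts are finite computations.\<close>

definition mex_pair :: "nat \<Rightarrow> nat \<Rightarrow> nat" where
  "mex_pair a b = (if a \<noteq> 0 \<and> b \<noteq> 0 then 0 else if a \<noteq> 1 \<and> b \<noteq> 1 then 1 else 2)"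

lemma mex_empty: "mex {} = 0"
  unfolding mex_def by simp

lemma mex_insert_pair: "mex {a, b} = mex_pair a b"
  unfolding mex_def mex_pair_def by (rule Least_equality) auto

lemma mex_pair_commute: "mex_pair a b = mex_pair b a"
  unfolding mex_pair_def by auto

text \<open>A window is a list of \<open>n\<close> consecutive values of a row, read left to right, paired with
  the number \<open>h\<close> of its cells inside the diagram. \<open>fill_line xs c\<close> is the line above \<open>xs\<close> when
  \<open>c\<close> is the value right of its last cell; \<open>line_above ws r\<close> is the line above \<open>ws\<close> when exactly
  its first \<open>r\<close> cells are inside; \<open>fill_block a b\<close> fills the block with right-hand column \<open>a\<close>
  (top to bottom) and lower row \<open>b\<close>, returning its top row.\<close>

fun fill_line :: "nat list \<Rightarrow> nat \<Rightarrow> nat list" where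
  "fill_line [] c = []"
| "fill_line (x # xs) c = (let ys = fill_line xs c in mex_pair x (hd (ys @ [c])) # ys)"

definition line_above :: "nat list \<Rightarrow> nat \<Rightarrow> nat list" where
  "line_above ws r = fill_line (take r ws) 0 @ replicate (length ws - r) 0"

definition fill_block :: "nat list \<Rightarrow> nat list \<Rightarrow> nat list" where
  "fill_block a b = foldr (\<lambda>c row. fill_line row c) a b"

definition window_certificate :: "nat \<Rightarrow> (nat list \<times> nat) set \<Rightarrow> bool" where
  "window_certificate n S \<longleftrightarrow> 1 < n \<and> (replicate n 0, 0) \<in> S \<and>
     (\<forall>(ws, h) \<in> S. \<forall>r \<in> {h..n}. (line_above ws r, r) \<in> S) \<and>
     (\<forall>(a, _) \<in> S. \<forall>(b, _) \<in> S. hd (fill_block a b) = fill_block (tl a) b ! 1)"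

lemma window_certificate_zero: "window_certificate n S \<Longrightarrow> (replicate n 0, 0) \<in> S"
  unfolding window_certificate_def by blast

lemma window_certificate_line_above:
  "window_certificate n S \<Longrightarrow> (ws, h) \<in> S \<Longrightarrow> h \<le> r \<Longrightarrow> r \<le> n \<Longrightarrow> (line_above ws r, r) \<in> S"
  unfolding window_certificate_def by fastforce

lemma window_certificate_block:
  "window_certificate n S \<Longrightarrow> (a, ha) \<in> S \<Longrightarrow> (b, hb) \<in> S
    \<Longrightarrow> hd (fill_block a b) = fill_block (tl a) b ! 1"
  unfolding window_certificate_def by fastforce

locale grundy_grid =
  fixes D :: "nat \<Rightarrow> nat \<Rightarrow> bool" and g :: "nat \<Rightarrow> nat \<Rightarrow> nat"
  assumes down_closed: "D i j \<Longrightarrow> i' \<le> i \<Longrightarrow> j' \<le> j \<Longrightarrow> D i' j'"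
    and finite_cells: "finite {(i, j). D i j}"
    and grid_rec: "g i j = (if D i j then mex_pair (g (Suc i) j) (g i (Suc j)) else 0)"
begin

lemma cells_bounded:
  obtains B where "\<And>i j. D i j \<Longrightarrow> i < B \<and> j < B"
proof -
  obtain B where "\<forall>p \<in> {(i, j). D i j}. fst p + snd p < B"
    using finite_nat_set_iff_bounded[of "(\<lambda>p. fst p + snd p) ` {(i, j). D i j}"] finite_cells
    by auto
  then show thesis by (intro that[of B]) fastforce
qed

lemma transpose: "grundy_grid (\<lambda>i j. D j i) (\<lambda>i j. g j i)"
proof
  have "{(i, j). D j i} = prod.swap ` {(i, j). D i j}" by auto
  then show "finite {(i, j). D j i}" using finite_cells by simp
qed (use down_closed grid_rec mex_pair_commute in auto)

definition row :: "nat \<Rightarrow> nat \<Rightarrow> nat \<Rightarrow> nat list" where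
  "row i j n = map (\<lambda>m. g i (j + m)) [0..<n]"

lemma row_0: "row i j 0 = []"
  unfolding row_def by simp

lemma row_Suc: "row i j (Suc n) = g i j # row i (Suc j) n"
  unfolding row_def by (simp add: upt_conv_Cons map_Suc_upt[symmetric] del: upt_Suc)

lemma fill_line_row:
  assumes "\<And>m. m < n \<Longrightarrow> D i (j + m)"
  shows "fill_line (row (Suc i) j n) (g i (j + n)) = row i j n"
  using assms
proof (induction n arbitrary: j)
  case (Suc n)
  have rest: "fill_line (row (Suc i) (Suc j) n) (g i (Suc (j + n))) = row i (Suc j) n"
    using Suc.IH[of "Suc j"] Suc.prems by fastforce
  have "hd (row i (Suc j) n @ [g i (Suc (j + n))]) = g i (Suc j)"
    by (cases n) (simp_all add: row_Suc row_0)
  moreover have "D i j" using Suc.prems[of 0] by simp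
  ultimately show ?case
    by (simp add: row_Suc rest Let_def grid_rec[of i j])
qed (simp add: row_0)

lemma height_exists:
  assumes "\<not> D i (j + n)"
  obtains r where "r \<le> n" "\<And>m. m < n \<Longrightarrow> D i (j + m) \<longleftrightarrow> m < r"
proof -
  define r where "r = (LEAST r. \<not> D i (j + r))"
  have "r \<le> n" unfolding r_def using assms by (rule Least_le)
  moreover have "D i (j + m) \<longleftrightarrow> m < r" for m
  proof
    assume "D i (j + m)"
    moreover have "\<not> D i (j + r)" unfolding r_def using assms by (rule LeastI)
    ultimately show "m < r"
      using down_closed[of i "j + m" i "j + r"] by (meson add_le_cancel_left le_refl not_less)
  qed (use not_less_Least r_def in blast)
  ultimately show thesis by (intro that) auto
qed

lemma row_step:
  assumes "r \<le> n" "\<And>m. m < n \<Longrightarrow> D i (j + m) \<longleftrightarrow> m < r" "\<not> D i (j + n)"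
  shows "row i j n = line_above (row (Suc i) j n) r"
proof -
  have "\<not> D i (j + r)" using assms by (cases "r < n") auto
  then have "g i (j + r) = 0" by (simp add: grid_rec)
  then have "fill_line (row (Suc i) j r) 0 = row i j r"
    using fill_line_row[of r i j] assms(1,2) by fastforce
  moreover have "take r (row (Suc i) j n) = row (Suc i) j r"
    using assms(1) unfolding row_def by (simp add: take_map)
  moreover have "row i j n = row i j r @ replicate (n - r) 0"
    using assms(1,2) unfolding row_def
    by (auto intro!: nth_equalityI simp: nth_append grid_rec[of i])
  ultimately show ?thesis by (simp add: line_above_def row_def)
qed

lemma row_state:
  assumes cert: "window_certificate n S" and outside: "\<not> D i (j + n)"
  shows "\<exists>h \<le> n. (row i j n, h) \<in> S \<and> (\<forall>m < n. D i (j + m) \<longleftrightarrow> m < h)"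
proof -
  obtain B where B: "\<And>i j. D i j \<Longrightarrow> i < B \<and> j < B" using cells_bounded by blast
  show ?thesis using outside
  proof (induction "B - i" arbitrary: i rule: less_induct)
    case less
    show ?case
    proof (cases "B \<le> i")
      case True
      then have outside_row: "\<not> D i m" for m using B leD by blast
      then have "row i j n = replicate n 0"
        unfolding row_def by (simp add: grid_rec[of i] map_replicate_const)
      then show ?thesis using window_certificate_zero[OF cert] outside_row by auto
    next
      case False
      have "\<not> D (Suc i) (j + n)"
        using less.prems down_closed[of "Suc i" "j + n" i "j + n"] by auto
      moreover have "B - Suc i < B - i" using False by simp
      ultimately obtain h where h: "h \<le> n" "(row (Suc i) j n, h) \<in> S"
          "\<And>m. m < n \<Longrightarrow> D (Suc i) (j + m) \<longleftrightarrow> m < h"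
        using less.hyps[of "Suc i"] by blast
      obtain r where r: "r \<le> n" "\<And>m. m < n \<Longrightarrow> D i (j + m) \<longleftrightarrow> m < r"
        using height_exists[OF less.prems] by blast
      have "h \<le> r"
      proof (rule ccontr)
        assume "\<not> h \<le> r"
        then have "D (Suc i) (j + r)" using h(3)[of r] h(1) by simp
        then have "D i (j + r)" using down_closed[of "Suc i" "j + r" i "j + r"] by simp
        then show False using r(2)[of r] \<open>\<not> h \<le> r\<close> h(1) by simp
      qed
      then have "(line_above (row (Suc i) j n) r, r) \<in> S"
        using window_certificate_line_above[OF cert h(2)] r(1) by blast
      then show ?thesis using row_step[OF r less.prems] r by auto
    qed
  qed
qed

lemma fill_block_rows:
  assumes "\<And>k m. k < n \<Longrightarrow> m < n \<Longrightarrow> D (i + k) (j + m)" "k \<le> n"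
  shows "fill_block (drop k (map (\<lambda>k. g (i + k) (j + n)) [0..<n])) (row (i + n) j n)
    = row (i + k) j n"
  using assms(2)
proof (induction k rule: inc_induct)
  case (step k)
  have "drop k (map (\<lambda>k. g (i + k) (j + n)) [0..<n])
        = g (i + k) (j + n) # drop (Suc k) (map (\<lambda>k. g (i + k) (j + n)) [0..<n])"
    using step.hyps by (simp add: Cons_nth_drop_Suc[symmetric])
  then show ?case
    using step.IH fill_line_row[of n "i + k" j] assms(1) step.hyps
    by (simp add: fill_block_def)
qed (simp add: fill_block_def)

lemma diagonal_step_at_rim:
  assumes cert: "window_certificate n S"
    and inside: "D (i + n - 1) (j + n - 1)" and outside: "\<not> D (i + n) (j + n)"
  shows "g i j = g (Suc i) (Suc j)"
proof -
  obtain n' where n': "n = Suc (Suc n')"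
    using cert unfolding window_certificate_def by (cases n; cases "n - 1") auto
  have block: "D (i + k) (j + m)" if "k < n" "m < n" for k m
    by (rule down_closed[OF inside]) (use that in auto)
  define a where "a = map (\<lambda>k. g (i + k) (j + n)) [0..<n]"
  obtain ha where ha: "(a, ha) \<in> S"
    using grundy_grid.row_state[OF transpose cert, where i = "j + n" and j = i] outside
    by (auto simp: a_def grundy_grid.row_def[OF transpose])
  obtain hb where hb: "(row (i + n) j n, hb) \<in> S"
    using row_state[OF cert, of "i + n" j] outside by auto
  have rows: "fill_block a (row (i + n) j n) = row i j n"
      "fill_block (tl a) (row (i + n) j n) = row (Suc i) j n"
    using fill_block_rows[where n = n and k = 0, OF block]
      fill_block_rows[where n = n and k = 1, OF block] n'
    by (simp_all add: a_def drop_Suc del: upt_Suc)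
  have "g i j = hd (row i j n)" using n' by (simp add: row_Suc)
  also have "\<dots> = fill_block (tl a) (row (i + n) j n) ! 1"
    using window_certificate_block[OF cert ha hb] rows(1) by simp
  also have "\<dots> = g (Suc i) (Suc j)" using n' rows(2) by (simp add: row_Suc)
  finally show ?thesis .
qed

lemma diagonal_step:
  assumes cert: "window_certificate n S" and "D (i + n - 1) (j + n - 1)"
  shows "g i j = g (Suc i) (Suc j)"
proof -
  obtain B where B: "\<And>i j. D i j \<Longrightarrow> i < B \<and> j < B" using cells_bounded by blast
  have n: "1 < n" using cert unfolding window_certificate_def by simp
  show ?thesis using assms(2)
  proof (induction "2 * B - (i + j)" arbitrary: i j rule: less_induct)
    case less
    show ?case
    proof (cases "D (i + n) (j + n)")
      case True
      have "D (Suc i + n - 1) (j + n - 1)" "D (i + n - 1) (Suc j + n - 1)"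
        by (rule down_closed[OF True]; use n in auto)+
      moreover have "i + j < 2 * B" using B[OF True] by simp
      ultimately have "g (Suc i) j = g (Suc (Suc i)) (Suc j)"
          "g i (Suc j) = g (Suc i) (Suc (Suc j))"
        using less.hyps[of "Suc i" j] less.hyps[of i "Suc j"] by simp_all
      moreover have "D i j" "D (Suc i) (Suc j)"
        using down_closed[OF True] n by simp_all
      ultimately show ?thesis by (simp add: grid_rec[of i j] grid_rec[of "Suc i" "Suc j"])
    qed (use diagonal_step_at_rim[OF cert less.prems] in simp)
  qed
qed

lemma diagonal_chain:
  assumes "window_certificate n S" "\<And>p. p < l \<Longrightarrow> D (p + n - 1) (p + n - 1)"
  shows "g 0 0 = g l l"
  using assms(2)
proof (induction l)
  case (Suc l)
  have "g 0 0 = g l l" using Suc by simp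
  also have "\<dots> = g (Suc l) (Suc l)" using diagonal_step[OF assms(1)] Suc.prems[of l] by blast
  finally show ?case .
qed simp

end

text \<open>The 26 window states reachable from the empty window under \<open>line_above\<close>.\<close>

definition lctr_window_states :: "(nat list \<times> nat) list" where
  "lctr_window_states =
    [([0,0,0,0],0), ([0,1,0,0],2), ([0,1,0,1],4), ([0,1,0,2],4), ([0,1,2,0],3), ([0,1,2,1],4),
     ([0,2,0,0],2), ([0,2,0,2],4), ([0,2,1,0],3), ([1,0,0,0],1), ([1,0,1,0],3), ([1,0,1,2],4),
     ([1,0,2,0],3), ([1,0,2,1],4), ([1,2,0,0],2), ([1,2,0,1],4), ([1,2,0,2],4), ([1,2,1,0],3),
     ([2,0,0,0],1), ([2,0,1,0],3), ([2,0,1,2],4), ([2,0,2,0],3), ([2,0,2,1],4), ([2,1,0,0],2),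
     ([2,1,0,1],4), ([2,1,2,1],4)]"

lemma window_certificate_lctr: "window_certificate 4 (set lctr_window_states)"
  unfolding window_certificate_def by code_simp

definition in_diagram :: "nat list \<Rightarrow> nat \<Rightarrow> nat \<Rightarrow> bool" where
  "in_diagram l i j \<longleftrightarrow> i < length l \<and> j < l ! i"

lemma partition_nth_antimono:
  assumes "is_partition l" "i \<le> k" "k < length l"
  shows "l ! k \<le> l ! i"
  using assms unfolding is_partition_def sorted_wrt_iff_nth_less
  by (cases "i = k") auto

lemma in_diagram_down_closed:
  assumes "is_partition l" "in_diagram l i j" "i' \<le> i" "j' \<le> j"
  shows "in_diagram l i' j'"
  using assms partition_nth_antimono[OF assms(1), of i' i] unfolding in_diagram_def by auto

lemma finite_in_diagram: "finite {(i, j). in_diagram l i j}"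
proof (rule finite_subset)
  show "{(i, j). in_diagram l i j} \<subseteq> {..<length l} \<times> {..<sum_list l}"
    using member_le_sum_list[OF nth_mem[of _ l]] unfolding in_diagram_def
    by (fastforce intro: order.strict_trans2)
qed simp

lemma shift_eq_Nil_iff:
  assumes "is_partition l"
  shows "shift l i j = [] \<longleftrightarrow> \<not> in_diagram l i j"
proof -
  have "shift l i j = [] \<longleftrightarrow> (\<forall>k < length l - i. l ! (i + k) \<le> j)"
    unfolding shift_def filter_empty_conv by (auto simp: all_set_conv_all_nth)
  also have "\<dots> \<longleftrightarrow> \<not> in_diagram l i j"
  proof
    assume "\<forall>k < length l - i. l ! (i + k) \<le> j"
    then show "\<not> in_diagram l i j" unfolding in_diagram_def by force
  next
    assume outside: "\<not> in_diagram l i j"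
    show "\<forall>k < length l - i. l ! (i + k) \<le> j"
    proof (intro allI impI)
      fix k assume "k < length l - i"
      then have "i < length l" "l ! (i + k) \<le> l ! i"
        using partition_nth_antimono[OF assms, of i "i + k"] by simp_all
      then show "l ! (i + k) \<le> j" using outside unfolding in_diagram_def by simp
    qed
  qed
  finally show ?thesis .
qed

lemma shift_0_0: "is_partition l \<Longrightarrow> shift l 0 0 = l"
  unfolding is_partition_def shift_def by (simp add: filter_id_conv)

text \<open>In a non-increasing list, the entries dropped by the filter form a suffix.\<close>

lemma tl_filter_pos_map_diff:
  assumes "sorted_wrt (\<ge>) (xs :: nat list)"
  shows "tl (filter (\<lambda>x. 0 < x) (map (\<lambda>x. x - j) xs))
    = filter (\<lambda>x. 0 < x) (map (\<lambda>x. x - j) (tl xs))"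
proof (cases xs)
  case (Cons x ys)
  show ?thesis
  proof (cases "j < x")
    case False
    then have "filter (\<lambda>x. 0 < x) (map (\<lambda>x. x - j) ys) = []"
      using assms Cons by (auto simp: filter_empty_conv)
    then show ?thesis using Cons False by simp
  qed (use Cons in simp)
qed simp

lemma shift_shift_row:
  assumes "is_partition l"
  shows "shift (shift l i j) 1 0 = shift l (Suc i) j"
proof -
  have "sorted_wrt (\<ge>) (drop i l)"
    using assms unfolding is_partition_def by (simp add: sorted_wrt_drop)
  moreover have "filter (\<lambda>x. 0 < x) (tl xs) = tl xs" if "\<forall>x \<in> set xs. 0 < x" for xs :: "nat list"
    using that by (cases xs) (simp_all add: filter_id_conv)
  ultimately show ?thesis
    unfolding shift_def by (simp add: tl_filter_pos_map_diff drop_Suc tl_drop)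
qed

lemma shift_shift_col: "shift (shift l i j) 0 1 = shift l i (Suc j)"
proof -
  have "filter (\<lambda>x. 0 < x) (map (\<lambda>x. x - 1) (filter (\<lambda>x. 0 < x) (map (\<lambda>x. x - j) xs)))
        = filter (\<lambda>x. 0 < x) (map (\<lambda>x. x - Suc j) xs)" for xs :: "nat list"
    by (induction xs) auto
  then show ?thesis unfolding shift_def by simp
qed

lemma grundy_grid_lctr:
  assumes "is_partition l"
  shows "grundy_grid (in_diagram l) (\<lambda>i j. sg (shift l i j))"
proof
  show "in_diagram l i' j'" if "in_diagram l i j" "i' \<le> i" "j' \<le> j" for i j i' j'
    using in_diagram_down_closed[OF assms that] .
  show "sg (shift l i j) = (if in_diagram l i j
          then mex_pair (sg (shift l (Suc i) j)) (sg (shift l i (Suc j))) else 0)" for i j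
    by (subst sg.simps) (simp add: shift_eq_Nil_iff[OF assms] mex_insert_pair mex_empty
        shift_shift_row[OF assms, unfolded One_nat_def] shift_shift_col[unfolded One_nat_def])
qed (rule finite_in_diagram)

lemma in_diagram_durfee:
  assumes "durfee l \<ge> 1"
  shows "in_diagram l (durfee l - 1) (durfee l - 1)"
proof -
  let ?K = "{0} \<union> {k. 1 \<le> k \<and> k \<le> length l \<and> k \<le> l ! (k - 1)}"
  have "finite ?K" by (rule finite_subset[of _ "{0..length l}"]) auto
  then have "durfee l \<in> ?K" unfolding durfee_def by (intro Max_in) auto
  then show ?thesis using assms unfolding in_diagram_def by auto
qed

theorem mainTheorem11:
  fixes lam :: "nat list"
  assumes "is_partition lam" and "durfee lam \<ge> 3"
  shows "sg lam = sg (shift lam (durfee lam - 3) (durfee lam - 3))"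
proof -
  interpret grundy_grid "in_diagram lam" "\<lambda>i j. sg (shift lam i j)"
    using grundy_grid_lctr[OF assms(1)] .
  let ?d = "durfee lam"
  have corner: "in_diagram lam (?d - 1) (?d - 1)" using in_diagram_durfee assms(2) by simp
  have "in_diagram lam (p + 4 - 1) (p + 4 - 1)" if "p < ?d - 3" for p
    by (rule down_closed[OF corner]) (use that in auto)
  then have "sg (shift lam 0 0) = sg (shift lam (?d - 3) (?d - 3))"
    using diagonal_chain[OF window_certificate_lctr] by blast
  then show ?thesis using shift_0_0[OF assms(1)] by simp
qed

end
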